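(* Let $n\ge 1$ and $m\ge 2$ be integers, and let $\chi_{n,m}\colon\mathbb{F}_2^n\to\mathbb{F}_2^n$ be given by $\chi_{n,m}(x)=y$ with $y_i=x_i+x_{i+m}(x_{i+m-1}+1)(x_{i+m-2}+1)\cdots(x_{i+1}+1)$ for $i\in\{0,\dots,n-1\}$, indices modulo $n$. Then $\chi_{n,m}$ is a permutation of $\mathbb{F}_2^n$ if and only if $m\nmid n$. In particular, if $m\nmid n$ and $\ell=\lfloor n/m\rfloor$, then $$\chi_{n,m}^{-1}=\theta_{m,0}+\theta_{m,1}+\theta_{m,2}+\cdots+\theta_{m,\ell},$$ equivalently, $\chi_{n,m}^{-1}(x)=y$ with $y_i=x_i+\sum_{k=1}^{\ell}x_{i+mk}\prod_{1\le j\le mk-1,\ m\nmid j}(x_{i+j}+1)$; moreover the algebraic degree of $\chi_{n,m}^{-1}$ is $(m-1)\ell+1$.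
   Context: For a nonnegative integer $k$, $\theta_{m,k}\colon\mathbb{F}_2^n\to\mathbb{F}_2^n$ is defined by $\theta_{m,k}(x)=y$ with $y_i=x_{i+mk}\prod_{1\le j\le mk-1,\ m\nmid j}(x_{i+j}+1)$ (indices modulo $n$); $\theta_{m,0}$ is the identity map. Sums of maps are pointwise sums. The algebraic degree of a map $\mathbb{F}_2^n\to\mathbb{F}_2^n$ is the maximum degree of the algebraic normal forms of its coordinate functions. *)

theory Defs
  imports Main "HOL-Library.Z2"
begin

text \<open>F_2 is the two-element field \<open>bit\<close>. A vector of F_2^n is a function
  \<open>nat \<Rightarrow> bit\<close> that vanishes outside the index range 0..n-1.\<close>

definition vecs :: "nat \<Rightarrow> (nat \<Rightarrow> bit) set" where
  "vecs n = {x. \<forall>i\<ge>n. x i = 0}"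

definition chi :: "nat \<Rightarrow> nat \<Rightarrow> (nat \<Rightarrow> bit) \<Rightarrow> (nat \<Rightarrow> bit)" where
  "chi n m x = (\<lambda>i. if i < n then
      x i + x ((i + m) mod n) * (\<Prod>j\<in>{1..<m}. x ((i + j) mod n) + 1)
    else 0)"

definition theta :: "nat \<Rightarrow> nat \<Rightarrow> nat \<Rightarrow> (nat \<Rightarrow> bit) \<Rightarrow> (nat \<Rightarrow> bit)" where
  "theta n m k x = (\<lambda>i. if i < n then
      (if k = 0 then x i
       else x ((i + m * k) mod n) *
            (\<Prod>j\<in>{j. 1 \<le> j \<and> j \<le> m * k - 1 \<and> \<not> m dvd j}. x ((i + j) mod n) + 1))
    else 0)"

definition theta_sum :: "nat \<Rightarrow> nat \<Rightarrow> nat \<Rightarrow> (nat \<Rightarrow> bit) \<Rightarrow> (nat \<Rightarrow> bit)" where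
  "theta_sum n m l x = (\<lambda>i. \<Sum>k\<in>{0..l}. theta n m k x i)"

text \<open>Algebraic normal form: the coefficient of the monomial prod_{i in S} x_i of a
  Boolean function f on F_2^n is the sum of f over the indicator vectors of subsets of S.\<close>
definition ind_vec :: "nat set \<Rightarrow> (nat \<Rightarrow> bit)" where
  "ind_vec T = (\<lambda>i. if i \<in> T then 1 else 0)"

definition anf_coeff :: "((nat \<Rightarrow> bit) \<Rightarrow> bit) \<Rightarrow> nat set \<Rightarrow> bit" where
  "anf_coeff f S = (\<Sum>T\<in>Pow S. f (ind_vec T))"

definition bool_degree :: "nat \<Rightarrow> ((nat \<Rightarrow> bit) \<Rightarrow> bit) \<Rightarrow> nat" where
  "bool_degree n f = Max ({card S | S. S \<subseteq> {0..<n} \<and> anf_coeff f S \<noteq> 0} \<union> {0})"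

definition alg_degree :: "nat \<Rightarrow> ((nat \<Rightarrow> bit) \<Rightarrow> (nat \<Rightarrow> bit)) \<Rightarrow> nat" where
  "alg_degree n F = Max ({bool_degree n (\<lambda>x. F x i) | i. i < n} \<union> {0})"

end

theory Submission
  imports Defs
begin

text \<open>
  Extend x \<in> F_2^n to the n-periodic sequence z_p = x_(p mod n).  On sequences chi and
  theta_(m,k) become the shift-equivariant maps chi_seq and theta_seq, and they satisfy
  theta_k(z) = theta_k(chi z) + theta_(k+1)(z): for k = 0 this is the definition of chi, and for
  k > 0 it holds because wherever theta_(k-1)(chi z) is nonzero at p + m, chi does not change z
  strictly between p and p + m.  Telescoping gives
  z = theta_0(chi z) + ... + theta_l(chi z) + theta_(l+1)(z).  For l = n div m and m not dividing n
  the last term vanishes on n-periodic z, because its product contains both z_(p+m(l+1)) and the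
  complement of z_(p+m(l+1)-n), the same coordinate, as m(l+1) - n is not a multiple of m.
  So theta_(m,0) + ... + theta_(m,l) is a left inverse of chi on the finite set F_2^n, hence its
  inverse.  If m divides n, chi maps the indicator of the multiples of m to 0.

  Each coordinate of theta_(m,k) is the indicator x_a (x_b1 + 1) ... (x_bs + 1) of a subcube, with
  s = (m - 1)k distinct indices different from a; its algebraic normal form has the unique top
  monomial x_a x_b1 ... x_bs.  The degrees increase strictly with k, so the top monomial of
  theta_(m,l) survives in the sum.
\<close>

lemma bit_prod_eq_1_iff:
  "finite A \<Longrightarrow> (\<Prod>a\<in>A. f a) = (1::bit) \<longleftrightarrow> (\<forall>a\<in>A. f a = 1)"
  by (simp flip: bit_not_zero_iff)

lemma bit_add_add_self: "(a::bit) + b + b = a"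
  by (cases b) simp_all

lemma bit_mult_self_add_1: "(a::bit) * (a + 1) = 0"
  by (cases a) simp_all

definition blank :: "nat \<Rightarrow> (nat \<Rightarrow> bit) \<Rightarrow> nat \<Rightarrow> bit" where
  "blank m z p = (\<Prod>t\<in>{1..<m}. z (p + t) + 1)"

lemma blank_eq_1_iff: "blank m z p = 1 \<longleftrightarrow> (\<forall>t\<in>{1..<m}. z (p + t) = 0)"
  by (simp add: blank_def bit_prod_eq_1_iff)

definition chi_seq :: "nat \<Rightarrow> (nat \<Rightarrow> bit) \<Rightarrow> nat \<Rightarrow> bit" where
  "chi_seq m z q = z q + z (q + m) * blank m z q"

fun theta_seq :: "nat \<Rightarrow> (nat \<Rightarrow> bit) \<Rightarrow> nat \<Rightarrow> nat \<Rightarrow> bit" where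
  "theta_seq m z 0 p = z p"
| "theta_seq m z (Suc k) p = blank m z p * theta_seq m z k (p + m)"

lemma chi_seq_eq_on_window:
  assumes "z (p + m) = 1 \<or> blank m z (p + m) = 1" and "t \<in> {1..<m}"
  shows "chi_seq m z (p + t) = z (p + t)"
proof -
  have "z (p + t + m) * blank m z (p + t) = 0"
  proof (rule ccontr)
    assume "z (p + t + m) * blank m z (p + t) \<noteq> 0"
    then have z1: "z (p + t + m) = 1" and "blank m z (p + t) = 1"
      by (cases "z (p + t + m)"; cases "blank m z (p + t)"; simp)+
    moreover have "m - t \<in> {1..<m}" and "p + t + (m - t) = p + m"
      using assms(2) by auto
    ultimately have "z (p + m) = 0" unfolding blank_eq_1_iff by metis
    with assms(1) have "blank m z (p + m) = 1" by simp
    then have "z (p + m + t) = 0" using assms(2) blank_eq_1_iff by blast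
    with z1 show False by (simp add: ac_simps)
  qed
  then show ?thesis by (simp add: chi_seq_def)
qed

lemma blank_chi_seq:
  assumes "z (p + m) = 1 \<or> blank m z (p + m) = 1"
  shows "blank m (chi_seq m z) p = blank m z p"
  unfolding blank_def using chi_seq_eq_on_window[OF assms] by (intro prod.cong) auto

lemma theta_seq_chi_seq_eq_1D:
  "theta_seq m (chi_seq m z) k p = 1 \<Longrightarrow> z p = 1 \<or> blank m z p = 1"
proof (induction k arbitrary: p)
  case 0
  then show ?case by (cases "z p"; cases "blank m z p") (simp_all add: chi_seq_def)
next
  case (Suc k)
  then have "blank m (chi_seq m z) p = 1" and "theta_seq m (chi_seq m z) k (p + m) = 1"
    by (cases "blank m (chi_seq m z) p"; simp)+
  with Suc.IH blank_chi_seq show ?case by metis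
qed

lemma theta_seq_step:
  "theta_seq m z k p = theta_seq m (chi_seq m z) k p + theta_seq m z (Suc k) p"
proof (induction k arbitrary: p)
  case 0
  show ?case
    by (simp only: theta_seq.simps chi_seq_def mult.commute[of "blank m z p"] bit_add_add_self)
next
  case (Suc k)
  let ?c = "chi_seq m z"
  have blank_eq: "blank m z p * theta_seq m ?c k (p + m) = blank m ?c p * theta_seq m ?c k (p + m)"
    using theta_seq_chi_seq_eq_1D[of m z k "p + m"] blank_chi_seq[of z p m]
    by (cases "theta_seq m ?c k (p + m)") auto
  have "theta_seq m z (Suc k) p = blank m z p * theta_seq m z k (p + m)"
    by simp
  also have "\<dots> = blank m z p * (theta_seq m ?c k (p + m) + theta_seq m z (Suc k) (p + m))"
    by (simp only: Suc.IH[of "p + m"])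
  also have "\<dots> = theta_seq m ?c (Suc k) p + theta_seq m z (Suc (Suc k)) p"
    by (simp only: distrib_left blank_eq theta_seq.simps)
  finally show ?case .
qed

lemma theta_seq_telescope:
  "z p = (\<Sum>k<L. theta_seq m (chi_seq m z) k p) + theta_seq m z L p"
proof (induction L)
  case (Suc L)
  then show ?case using theta_seq_step[of m z L p] by (simp only: sum.lessThan_Suc add.assoc)
qed simp

definition gaps :: "nat \<Rightarrow> nat \<Rightarrow> nat set" where
  "gaps m k = {j. j < m * k \<and> \<not> m dvd j}"

lemma finite_gaps [simp]: "finite (gaps m k)"
  by (simp add: gaps_def)

lemma gaps_0 [simp]: "gaps m 0 = {}"
  by (simp add: gaps_def)

lemma gaps_Suc: "gaps m (Suc k) = {1..<m} \<union> (\<lambda>j. j + m) ` gaps m k"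
proof (intro set_eqI iffI)
  fix j
  assume j: "j \<in> gaps m (Suc k)"
  show "j \<in> {1..<m} \<union> (\<lambda>j. j + m) ` gaps m k"
  proof (cases "j < m")
    case True
    with j show ?thesis by (cases j) (auto simp: gaps_def)
  next
    case False
    then have j_eq: "j = j - m + m"
      by simp
    with j have "j - m \<in> gaps m k"
      by (auto simp: gaps_def)
    with j_eq show ?thesis by blast
  qed
next
  fix j
  assume "j \<in> {1..<m} \<union> (\<lambda>j. j + m) ` gaps m k"
  then show "j \<in> gaps m (Suc k)"
    by (auto simp: gaps_def dest: dvd_imp_le)
qed

lemma card_gaps: "card (gaps m k) = (m - 1) * k"
proof (induction k)
  case (Suc k)
  have "card (gaps m (Suc k)) = card {1..<m} + card ((\<lambda>j. j + m) ` gaps m k)"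
    unfolding gaps_Suc by (rule card_Un_disjoint) auto
  also have "card ((\<lambda>j. j + m) ` gaps m k) = card (gaps m k)"
    by (rule card_image) simp
  finally show ?case using Suc.IH by simp
qed simp

lemma theta_seq_eq_prod:
  "theta_seq m z k p = z (p + m * k) * (\<Prod>j\<in>gaps m k. z (p + j) + 1)"
proof (induction k arbitrary: p)
  case (Suc k)
  have "(\<Prod>j\<in>gaps m (Suc k). z (p + j) + 1) =
      blank m z p * (\<Prod>j\<in>(\<lambda>j. j + m) ` gaps m k. z (p + j) + 1)"
    unfolding gaps_Suc blank_def by (rule prod.union_disjoint) auto
  also have "(\<Prod>j\<in>(\<lambda>j. j + m) ` gaps m k. z (p + j) + 1) = (\<Prod>j\<in>gaps m k. z (p + m + j) + 1)"
    by (subst prod.reindex) (simp_all add: comp_def ac_simps)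
  finally have prod_Suc: "(\<Prod>j\<in>gaps m (Suc k). z (p + j) + 1) =
      blank m z p * (\<Prod>j\<in>gaps m k. z (p + m + j) + 1)" .
  have "theta_seq m z (Suc k) p =
      blank m z p * (z (p + m + m * k) * (\<Prod>j\<in>gaps m k. z (p + m + j) + 1))"
    by (simp only: theta_seq.simps Suc.IH)
  also have "\<dots> = z (p + m * Suc k) * (\<Prod>j\<in>gaps m (Suc k). z (p + j) + 1)"
    by (simp only: prod_Suc mult_Suc_right add.assoc mult.left_commute)
  finally show ?case .
qed simp

lemma theta_seq_periodic_eq_0:
  assumes periodic: "\<And>q. z (q + n) = z q" and "0 < n" "\<not> m dvd n" "n < m * k"
  shows "theta_seq m z k p = 0"
proof -
  define j where "j = m * k - n"
  have "\<not> m dvd j"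
    using assms(3,4) unfolding j_def
    by (metis diff_diff_cancel dvd_diff_nat dvd_triv_left less_imp_le)
  with assms(2,4) have j: "j \<in> gaps m k"
    by (simp add: gaps_def j_def)
  have "z (p + m * k) = z (p + j)"
    using periodic[of "p + j"] assms(4) by (simp add: j_def)
  then have "theta_seq m z k p =
      (z (p + j) * (z (p + j) + 1)) * (\<Prod>i\<in>gaps m k - {j}. z (p + i) + 1)"
    by (simp only: theta_seq_eq_prod prod.remove[OF finite_gaps j] mult.assoc)
  then show ?thesis
    by (simp only: bit_mult_self_add_1 mult_zero_left)
qed

definition periodic_ext :: "nat \<Rightarrow> (nat \<Rightarrow> bit) \<Rightarrow> nat \<Rightarrow> bit" where
  "periodic_ext n x p = x (p mod n)"

lemma periodic_ext_chi:
  assumes "0 < n"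
  shows "periodic_ext n (chi n m x) = chi_seq m (periodic_ext n x)"
  using assms by (auto simp: fun_eq_iff periodic_ext_def chi_def chi_seq_def blank_def mod_add_left_eq)

lemma theta_set_eq_gaps: "{j. 1 \<le> j \<and> j \<le> m * k - 1 \<and> \<not> m dvd j} = gaps m k"
  by (auto simp: gaps_def Suc_le_eq intro: gr0I)

lemma theta_eq_theta_seq:
  assumes "i < n"
  shows "theta n m k x i = theta_seq m (periodic_ext n x) k i"
  using assms unfolding theta_def theta_set_eq_gaps
  by (simp add: theta_seq_eq_prod periodic_ext_def)

lemma finite_vecs: "finite (vecs n)"
proof -
  have "x i \<in> {0, 1}" for x :: "nat \<Rightarrow> bit" and i
    by (cases "x i") simp_all
  then have "vecs n = {x. \<forall>i. (i \<in> {..<n} \<longrightarrow> x i \<in> {0, 1}) \<and> (i \<notin> {..<n} \<longrightarrow> x i = 0)}"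
    by (auto simp: vecs_def)
  then show ?thesis
    using finite_set_of_finite_funs[of "{..<n}" "{0, 1}" 0] by simp
qed

lemma theta_sum_chi:
  assumes "0 < n" "0 < m" "\<not> m dvd n" "x \<in> vecs n"
  shows "theta_sum n m (n div m) (chi n m x) = x"
proof
  fix i
  show "theta_sum n m (n div m) (chi n m x) i = x i"
  proof (cases "i < n")
    case True
    let ?z = "periodic_ext n x"
    have "n < m * Suc (n div m)"
      using dividend_less_times_div[OF assms(2), of n] by simp
    with assms(1,3) have vanish: "theta_seq m ?z (Suc (n div m)) i = 0"
      by (intro theta_seq_periodic_eq_0) (simp_all add: periodic_ext_def)
    have "theta_sum n m (n div m) (chi n m x) i =
        (\<Sum>k<Suc (n div m). theta_seq m (chi_seq m ?z) k i)"
      using True by (simp add: theta_sum_def theta_eq_theta_seq periodic_ext_chi[OF assms(1)]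
          atLeast0AtMost lessThan_Suc_atMost)
    also have "\<dots> = ?z i"
      using theta_seq_telescope[of ?z i m "Suc (n div m)"] by (simp only: vanish add_0_right)
    also have "\<dots> = x i"
      using True by (simp add: periodic_ext_def)
    finally show ?thesis .
  next
    case False
    then show ?thesis
      using assms(4) by (simp add: theta_sum_def theta_def vecs_def)
  qed
qed

lemma bij_betw_chi:
  assumes "0 < n" "0 < m" "\<not> m dvd n"
  shows "bij_betw (chi n m) (vecs n) (vecs n)"
proof -
  have inj: "inj_on (chi n m) (vecs n)"
    by (rule inj_on_inverseI[of _ "theta_sum n m (n div m)"]) (rule theta_sum_chi[OF assms])
  have "chi n m ` vecs n \<subseteq> vecs n"
    by (auto simp: vecs_def chi_def)
  then have "chi n m ` vecs n = vecs n"
    by (rule endo_inj_surj[OF finite_vecs _ inj])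
  with inj show ?thesis
    by (simp add: bij_betw_def)
qed

lemma the_inv_into_chi:
  assumes "0 < n" "0 < m" "\<not> m dvd n" "y \<in> vecs n"
  shows "the_inv_into (vecs n) (chi n m) y = theta_sum n m (n div m) y"
proof -
  have bij: "bij_betw (chi n m) (vecs n) (vecs n)"
    by (rule bij_betw_chi[OF assms(1-3)])
  then obtain x where x: "x \<in> vecs n" "y = chi n m x"
    using assms(4) by (auto simp: bij_betw_def)
  then show ?thesis
    using the_inv_into_f_f[OF bij_betw_imp_inj_on[OF bij] x(1)] theta_sum_chi[OF assms(1-3) x(1)]
    by simp
qed

lemma chi_not_inj_on:
  assumes "0 < n" "m dvd n"
  shows "\<not> inj_on (chi n m) (vecs n)"
proof
  assume inj: "inj_on (chi n m) (vecs n)"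
  define w :: "nat \<Rightarrow> bit" where "w i = (if i < n \<and> m dvd i then 1 else 0)" for i
  have w_mod: "w (p mod n) = (if m dvd p then 1 else 0)" for p
    using assms by (simp add: w_def dvd_mod_iff)
  have "chi n m w = (\<lambda>_. 0)"
  proof
    fix i
    show "chi n m w i = 0"
    proof (cases "i < n \<and> m dvd i")
      case True
      have "\<not> m dvd i + j" if "j \<in> {1..<m}" for j
        using True that by (auto simp: dvd_add_right_iff dest: dvd_imp_le)
      then have "(\<Prod>j\<in>{1..<m}. w ((i + j) mod n) + 1) = 1"
        by (simp add: w_mod)
      with True show ?thesis
        using w_mod[of i] w_mod[of "i + m"] by (simp add: chi_def)
    next
      case False
      then show ?thesis
        using w_mod[of i] w_mod[of "i + m"] by (auto simp: chi_def)
    qed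
  qed
  moreover have "chi n m (\<lambda>_. 0) = (\<lambda>_. 0)"
    by (simp add: chi_def fun_eq_iff)
  moreover have "w \<in> vecs n" "(\<lambda>_. 0) \<in> vecs n"
    by (simp_all add: vecs_def w_def)
  moreover have "w \<noteq> (\<lambda>_. 0)"
    using assms(1) by (auto simp: w_def fun_eq_iff)
  ultimately show False
    using inj by (metis inj_onD)
qed

definition cube_ind :: "nat \<Rightarrow> nat set \<Rightarrow> (nat \<Rightarrow> bit) \<Rightarrow> bit" where
  "cube_ind a B x = x a * (\<Prod>b\<in>B. x b + 1)"

lemma cube_ind_ind_vec:
  assumes "finite B"
  shows "cube_ind a B (ind_vec T) = of_bool (a \<in> T \<and> T \<inter> B = {})"
proof -
  have "(\<Prod>b\<in>B. ind_vec T b + 1) = 1 \<longleftrightarrow> T \<inter> B = {}"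
    using assms by (auto simp: bit_prod_eq_1_iff ind_vec_def)
  then show ?thesis
    by (cases "\<Prod>b\<in>B. ind_vec T b + 1") (simp_all add: cube_ind_def ind_vec_def)
qed

lemma anf_coeff_cube_ind:
  assumes "finite S" "finite B" "a \<notin> B"
  shows "anf_coeff (cube_ind a B) S = (if a \<in> S then of_nat (2 ^ card (S - insert a B)) else 0)"
proof -
  let ?C = "{T \<in> Pow S. a \<in> T \<and> T \<inter> B = {}}"
  have coeff: "anf_coeff (cube_ind a B) S = of_nat (card ?C)"
    using assms(1,2) by (simp add: anf_coeff_def cube_ind_ind_vec Int_def)
  show ?thesis
  proof (cases "a \<in> S")
    case True
    have "?C = insert a ` Pow (S - insert a B)"
    proof (intro set_eqI iffI)
      fix T
      assume "T \<in> ?C"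
      then show "T \<in> insert a ` Pow (S - insert a B)"
        by (intro image_eqI[of _ _ "T - {a}"]) auto
    qed (use True assms(3) in auto)
    moreover have "inj_on (insert a) (Pow (S - insert a B))"
      by (auto simp: inj_on_def insert_ident)
    ultimately show ?thesis
      using assms(1) True coeff by (simp add: card_image card_Pow)
  next
    case False
    then have "?C = {}"
      by auto
    then show ?thesis
      using coeff False by (simp only: card.empty of_nat_0 if_False)
  qed
qed

lemma anf_coeff_cube_ind_neq_0_card_le:
  assumes "finite S" "finite B" "a \<notin> B" "anf_coeff (cube_ind a B) S \<noteq> 0"
  shows "card S \<le> Suc (card B)"
proof -
  have "a \<in> S" and "card (S - insert a B) = 0"
    using assms(4) by (auto simp: anf_coeff_cube_ind[OF assms(1-3)] power_0_left split: if_splits)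
  with assms(1) have "S \<subseteq> insert a B"
    by auto
  with assms(2,3) show ?thesis
    by (metis card_insert_disjoint card_mono finite_insert)
qed

lemma anf_coeff_cube_ind_top:
  "finite B \<Longrightarrow> a \<notin> B \<Longrightarrow> anf_coeff (cube_ind a B) (insert a B) = 1"
  by (simp add: anf_coeff_cube_ind)

lemma anf_coeff_sum: "anf_coeff (\<lambda>x. \<Sum>k\<in>K. f k x) S = (\<Sum>k\<in>K. anf_coeff (f k) S)"
  unfolding anf_coeff_def by (rule sum.swap)

lemma bool_degree_eqI:
  assumes "\<And>S. S \<subseteq> {0..<n} \<Longrightarrow> anf_coeff f S \<noteq> 0 \<Longrightarrow> card S \<le> d"
    and "S \<subseteq> {0..<n}" "anf_coeff f S \<noteq> 0" "card S = d"
  shows "bool_degree n f = d"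
  unfolding bool_degree_def
proof (rule Max_eqI)
  have "{card S |S. S \<subseteq> {0..<n} \<and> anf_coeff f S \<noteq> 0} \<subseteq> card ` Pow {0..<n}"
    by auto
  then show "finite ({card S |S. S \<subseteq> {0..<n} \<and> anf_coeff f S \<noteq> 0} \<union> {0})"
    by (simp add: finite_subset)
qed (use assms in auto)

lemma bool_degree_cong:
  assumes "\<And>x. x \<in> vecs n \<Longrightarrow> f x = g x"
  shows "bool_degree n f = bool_degree n g"
proof -
  have "anf_coeff f S = anf_coeff g S" if "S \<subseteq> {0..<n}" for S
    unfolding anf_coeff_def using that
    by (intro sum.cong refl assms) (auto simp: vecs_def ind_vec_def)
  then have "{card S |S. S \<subseteq> {0..<n} \<and> anf_coeff f S \<noteq> 0} =
      {card S |S. S \<subseteq> {0..<n} \<and> anf_coeff g S \<noteq> 0}"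
    by metis
  then show ?thesis
    by (simp add: bool_degree_def)
qed

lemma alg_degree_eqI:
  assumes "0 < n" "\<And>i. i < n \<Longrightarrow> bool_degree n (\<lambda>x. F x i) = d"
  shows "alg_degree n F = d"
proof -
  have "{bool_degree n (\<lambda>x. F x i) |i. i < n} = {d}"
    using assms by auto
  then show ?thesis
    by (simp add: alg_degree_def)
qed

lemma bool_degree_sum_cube_ind:
  fixes l :: nat
  assumes sub: "\<And>k. k \<le> l \<Longrightarrow> insert (a k) (B k) \<subseteq> {0..<n}"
    and notin: "\<And>k. k \<le> l \<Longrightarrow> a k \<notin> B k"
    and card_less: "\<And>k. k < l \<Longrightarrow> card (B k) < card (B l)"
  shows "bool_degree n (\<lambda>x. \<Sum>k\<in>{0..l}. cube_ind (a k) (B k) x) = Suc (card (B l))"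
proof (rule bool_degree_eqI[where S = "insert (a l) (B l)"])
  let ?f = "\<lambda>x. \<Sum>k\<in>{0..l}. cube_ind (a k) (B k) x"
  have fin: "finite (B k)" if "k \<le> l" for k
    using sub[OF that] by (meson finite_atLeastLessThan finite_insert finite_subset)
  have card_le: "card S \<le> Suc (card (B k))"
    if "S \<subseteq> {0..<n}" "k \<le> l" "anf_coeff (cube_ind (a k) (B k)) S \<noteq> 0" for S k
    using anf_coeff_cube_ind_neq_0_card_le[OF finite_subset[OF that(1) finite_atLeastLessThan]
        fin[OF that(2)] notin[OF that(2)] that(3)] .
  show "card S \<le> Suc (card (B l))" if S: "S \<subseteq> {0..<n}" and nz: "anf_coeff ?f S \<noteq> 0" for S
  proof -
    have "(\<Sum>k\<in>{0..l}. anf_coeff (cube_ind (a k) (B k)) S) \<noteq> 0"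
      using nz unfolding anf_coeff_sum .
    then obtain k where k: "k \<le> l" "anf_coeff (cube_ind (a k) (B k)) S \<noteq> 0"
      by (meson atLeastAtMost_iff sum.neutral)
    with card_le[OF S k] card_less[of k] show ?thesis
      by (cases "k = l") auto
  qed
  show sub_l: "insert (a l) (B l) \<subseteq> {0..<n}"
    by (rule sub) simp
  show card_top: "card (insert (a l) (B l)) = Suc (card (B l))"
    using fin notin by simp
  have "anf_coeff (cube_ind (a k) (B k)) (insert (a l) (B l)) = 0" if "k < l" for k
    using card_le[OF sub_l, of k] card_less[OF that] that card_top by fastforce
  then have lower_terms: "(\<Sum>k<l. anf_coeff (cube_ind (a k) (B k)) (insert (a l) (B l))) = 0"
    by simp
  have "{0..l} = insert l {..<l}"
    by auto
  then have "anf_coeff ?f (insert (a l) (B l)) =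
      anf_coeff (cube_ind (a l) (B l)) (insert (a l) (B l)) +
      (\<Sum>k<l. anf_coeff (cube_ind (a k) (B k)) (insert (a l) (B l)))"
    unfolding anf_coeff_sum by simp
  also have "\<dots> = 1"
    using fin notin lower_terms by (simp add: anf_coeff_cube_ind_top)
  finally show "anf_coeff ?f (insert (a l) (B l)) \<noteq> 0"
    by simp
qed

lemma inj_on_add_mod: "inj_on (\<lambda>j. (i + j) mod n) {..<n::nat}"
proof -
  have "j = j'" if "j \<le> j'" "j' < n" "(i + j) mod n = (i + j') mod n" for j j'
  proof -
    have "n dvd j' - j"
      using that(1,3) mod_eq_dvd_iff_nat[of "i + j" "i + j'" n] by simp
    with that(1,2) show ?thesis
      by (cases "j' - j = 0") (auto dest: dvd_imp_le)
  qed
  then show ?thesis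
    unfolding inj_on_def by (metis lessThan_iff nle_le)
qed

lemma gaps_subset: "gaps m k \<subseteq> {..<m * k}"
  by (auto simp: gaps_def)

lemma theta_eq_cube_ind:
  assumes "i < n" "m * k \<le> n"
  shows "theta n m k x i = cube_ind ((i + m * k) mod n) ((\<lambda>j. (i + j) mod n) ` gaps m k) x"
proof -
  have "gaps m k \<subseteq> {..<n}"
    using gaps_subset[of m k] assms(2) by auto
  then have "inj_on (\<lambda>j. (i + j) mod n) (gaps m k)"
    by (rule inj_on_subset[OF inj_on_add_mod])
  then show ?thesis
    using assms(1) by (simp add: theta_eq_theta_seq theta_seq_eq_prod cube_ind_def prod.reindex
        periodic_ext_def)
qed

lemma bool_degree_theta_sum:
  assumes "0 < n" "2 \<le> m" "\<not> m dvd n" "i < n"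
  shows "bool_degree n (\<lambda>x. theta_sum n m (n div m) x i) = (m - 1) * (n div m) + 1"
proof -
  define a where "a k = (i + m * k) mod n" for k
  define B where "B k = (\<lambda>j. (i + j) mod n) ` gaps m k" for k
  have mk_less: "m * k < n" if "k \<le> n div m" for k
  proof -
    have "m * k \<le> n"
      using that by (metis div_times_less_eq_dividend le_trans mult.commute mult_le_mono2)
    moreover have "m * k \<noteq> n"
      using assms(3) by auto
    ultimately show ?thesis
      by simp
  qed
  have inj: "inj_on (\<lambda>j. (i + j) mod n) (insert (m * k) (gaps m k))" if "k \<le> n div m" for k
  proof (rule inj_on_subset[OF inj_on_add_mod])
    show "insert (m * k) (gaps m k) \<subseteq> {..<n}"
      using mk_less[OF that] gaps_subset[of m k] by auto
  qed
  have "theta_sum n m (n div m) x i = (\<Sum>k\<in>{0..n div m}. cube_ind (a k) (B k) x)" for x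
    unfolding theta_sum_def a_def B_def using assms(4) mk_less
    by (intro sum.cong refl theta_eq_cube_ind) (auto intro: less_imp_le)
  then have "bool_degree n (\<lambda>x. theta_sum n m (n div m) x i) =
      bool_degree n (\<lambda>x. \<Sum>k\<in>{0..n div m}. cube_ind (a k) (B k) x)"
    by simp
  also have "\<dots> = Suc (card (B (n div m)))"
  proof (rule bool_degree_sum_cube_ind)
    fix k
    assume k: "k \<le> n div m"
    show "insert (a k) (B k) \<subseteq> {0..<n}"
      using assms(1) by (auto simp: a_def B_def)
    have "m * k \<notin> gaps m k"
      by (simp add: gaps_def)
    then show "a k \<notin> B k"
      using inj[OF k] by (simp add: a_def B_def)
  next
    fix k
    assume "k < n div m"
    with assms(2) show "card (B k) < card (B (n div m))"
      using inj by (simp add: B_def card_image card_gaps)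
  qed
  also have "\<dots> = (m - 1) * (n div m) + 1"
    using inj[of "n div m"] by (simp add: B_def card_image card_gaps)
  finally show ?thesis .
qed

theorem corollary2:
  fixes n m :: nat
  assumes "n \<ge> 1" and "m \<ge> 2"
  shows "(bij_betw (chi n m) (vecs n) (vecs n) \<longleftrightarrow> \<not> m dvd n) \<and>
         (\<not> m dvd n \<longrightarrow>
            (\<forall>x\<in>vecs n. the_inv_into (vecs n) (chi n m) x = theta_sum n m (n div m) x) \<and>
            alg_degree n (the_inv_into (vecs n) (chi n m)) = (m - 1) * (n div m) + 1)"
proof (intro conjI impI)
  have n: "0 < n" and m: "0 < m"
    using assms by simp_all
  show "bij_betw (chi n m) (vecs n) (vecs n) \<longleftrightarrow> \<not> m dvd n"
    using bij_betw_chi[OF n m] chi_not_inj_on[OF n] bij_betw_imp_inj_on by blast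
  assume not_dvd: "\<not> m dvd n"
  show "\<forall>x\<in>vecs n. the_inv_into (vecs n) (chi n m) x = theta_sum n m (n div m) x"
    using the_inv_into_chi[OF n m not_dvd] by blast
  show "alg_degree n (the_inv_into (vecs n) (chi n m)) = (m - 1) * (n div m) + 1"
  proof (rule alg_degree_eqI[OF n])
    fix i
    assume "i < n"
    have "bool_degree n (\<lambda>x. the_inv_into (vecs n) (chi n m) x i) =
        bool_degree n (\<lambda>x. theta_sum n m (n div m) x i)"
      by (rule bool_degree_cong) (simp add: the_inv_into_chi[OF n m not_dvd])
    also have "\<dots> = (m - 1) * (n div m) + 1"
      by (rule bool_degree_theta_sum[OF n assms(2) not_dvd \<open>i < n\<close>])
    finally show "bool_degree n (\<lambda>x. the_inv_into (vecs n) (chi n m) x i) =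
        (m - 1) * (n div m) + 1" .
  qed
qed

end
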